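(* For all $X,X'\in\mathcal X$, almost surely \[ K(X,X'):=\lim_{m\to\infty}\big\langle\nabla_\varphi f(X;\varphi^{(0)}),\nabla_\varphi f(X';\varphi^{(0)})\big\rangle=K_c(X,X')+K_u(X,X')+K_w(X,X'), \] where, with $(c,U,\operatorname{vec}(W))$ distributed as $\varphi_1^{(0)}$, $a=a(X;W)$, $a'=a(X';W)$, $M=XJ_s(X^\top Wq_X)X^\top$, $M'=X'J_s(X'^\top Wq_{X'})X'^\top$, \[ K_c=\mathbb E[\sigma(U^\top a)\sigma(U^\top a')],\quad K_u=\mathbb E[\sigma'(U^\top a)\sigma'(U^\top a')\langle a,a'\rangle],\quad K_w=\langle q_X,q_{X'}\rangle\,\mathbb E[\sigma'(U^\top a)\sigma'(U^\top a')U^\top MM'U]. \]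
   Context: $\mathcal{X}=\{X\in\mathbb{R}^{d\times T}:\max_t\|X_t\|_2\le1\}$; each $X$ has a fixed query $q_X\in\mathbb{R}^d$, $\|q_X\|_2\le1$. Softmax $(\sigma_s(z))_t=e^{z_t}/\sum_se^{z_s}$, $J_s(z)=\operatorname{diag}(\sigma_s(z))-\sigma_s(z)\sigma_s(z)^\top$; $a(X;W)=X\sigma_s(X^\top Wq_X)$; $h(X;\theta)=\sigma(U^\top a(X;W))$; $f(X;\varphi)=m^{-1/2}\sum_{i=1}^mc_ih(X;\theta_i)$ with $\varphi_i=(c_i,U_i,\operatorname{vec}(W_i))$; $\sigma$ differentiable with $|\sigma|\le\sigma_0$, $|\sigma'|\le\sigma_1$. For each even $m$, $\varphi^{(0)}$ is the symmetric initialization: $(c_i^{(0)},U_i^{(0)},W_i^{(0)})$, $i\le m/2$, are the first $m/2$ terms of a fixed i.i.d. sequence with $c$ uniform on $\{\pm1\}$, $U\sim\mathcal N(0,I_d)$, $W$ with i.i.d. $\mathcal N(0,1)$ entries (all independent), and $W_{i+m/2}^{(0)}=W_i^{(0)}$, $U_{i+m/2}^{(0)}=U_i^{(0)}$, $c_{i+m/2}^{(0)}=-c_i^{(0)}$; the limit is along even $m$. *)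

theory Defs
  imports "HOL-Analysis.Analysis" "HOL-Probability.Probability"
begin

text \<open>Inputs X are d x T matrices (type real^'t^'d; column t X is the t-th token X_t).\<close>

definition inX :: "real^'t^'d \<Rightarrow> bool" where
  "inX X \<longleftrightarrow> (\<forall>t. norm (column t X) \<le> 1)"

definition softmax :: "real^'t \<Rightarrow> real^'t" where
  "softmax z = (\<chi> t. exp (z$t) / (\<Sum>s\<in>UNIV. exp (z$s)))"

definition softmax_jac :: "real^'t \<Rightarrow> real^'t^'t" where
  "softmax_jac z = (\<chi> i j. (if i = j then softmax z $ i else 0) - softmax z $ i * softmax z $ j)"

definition attn :: "real^'d \<Rightarrow> real^'t^'d \<Rightarrow> real^'d^'d \<Rightarrow> real^'d" where
  "attn q X W = X *v softmax (transpose X *v (W *v q))"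

definition attnM :: "real^'d \<Rightarrow> real^'t^'d \<Rightarrow> real^'d^'d \<Rightarrow> real^'d^'d" where
  "attnM q X W = X ** softmax_jac (transpose X *v (W *v q)) ** transpose X"

text \<open>One neuron parameter theta_i = (c_i, U_i, W_i); a parameter vector phi for width m
  is a function on indices i < m (values at i >= m are irrelevant).\<close>
type_synonym 'd neuron = "real \<times> (real^'d) \<times> (real^'d^'d)"

definition hneur :: "(real \<Rightarrow> real) \<Rightarrow> real^'d \<Rightarrow> real^'t^'d \<Rightarrow> real^'d \<Rightarrow> real^'d^'d \<Rightarrow> real" where
  "hneur \<sigma> q X U W = \<sigma> (U \<bullet> attn q X W)"

definition fnet :: "(real \<Rightarrow> real) \<Rightarrow> nat \<Rightarrow> real^'d \<Rightarrow> real^'t^'d \<Rightarrow> (nat \<Rightarrow> 'd neuron) \<Rightarrow> real" where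
  "fnet \<sigma> m q X \<phi> = (1 / sqrt (real m)) *
      (\<Sum>i<m. fst (\<phi> i) * hneur \<sigma> q X (fst (snd (\<phi> i))) (snd (snd (\<phi> i))))"

type_synonym 'd coord = "unit + 'd + ('d \<times> 'd)"

fun param_get :: "('d::finite) coord \<Rightarrow> 'd neuron \<Rightarrow> real" where
  "param_get (Inl _) (c, U, W) = c"
| "param_get (Inr (Inl j)) (c, U, W) = U $ j"
| "param_get (Inr (Inr (j, k))) (c, U, W) = W $ j $ k"

fun param_set :: "('d::finite) coord \<Rightarrow> real \<Rightarrow> 'd neuron \<Rightarrow> 'd neuron" where
  "param_set (Inl _) x (c, U, W) = (x, U, W)"
| "param_set (Inr (Inl j)) x (c, U, W) = (c, (\<chi> l. if l = j then x else U $ l), W)"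
| "param_set (Inr (Inr (j, k))) x (c, U, W) =
     (c, U, (\<chi> l. \<chi> n. if l = j \<and> n = k then x else W $ l $ n))"

definition partial_f :: "(real \<Rightarrow> real) \<Rightarrow> nat \<Rightarrow> real^'d \<Rightarrow> real^'t^'d \<Rightarrow> (nat \<Rightarrow> 'd neuron)
    \<Rightarrow> nat \<Rightarrow> 'd coord \<Rightarrow> real" where
  "partial_f \<sigma> m q X \<phi> i \<kappa> =
     deriv (\<lambda>x. fnet \<sigma> m q X (\<phi>(i := param_set \<kappa> x (\<phi> i)))) (param_get \<kappa> (\<phi> i))"

definition ntk :: "(real \<Rightarrow> real) \<Rightarrow> nat \<Rightarrow> (real^'t^'d \<Rightarrow> real^'d) \<Rightarrow> real^'t^'d \<Rightarrow> real^'t^'d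
    \<Rightarrow> (nat \<Rightarrow> 'd neuron) \<Rightarrow> real" where
  "ntk \<sigma> m q X X' \<phi> =
     (\<Sum>i<m. \<Sum>\<kappa>\<in>UNIV. partial_f \<sigma> m (q X) X \<phi> i \<kappa> * partial_f \<sigma> m (q X') X' \<phi> i \<kappa>)"

definition sym_init :: "nat \<Rightarrow> (nat \<Rightarrow> real) \<Rightarrow> (nat \<Rightarrow> real^'d) \<Rightarrow> (nat \<Rightarrow> real^'d^'d)
    \<Rightarrow> nat \<Rightarrow> 'd neuron" where
  "sym_init m c U W i =
     (if i < m div 2 then (c i, U i, W i)
      else (- c (i - m div 2), U (i - m div 2), W (i - m div 2)))"

end

theory Submission
  imports Defs "HOL-Library.Discrete_Functions" "HOL-Real_Asymp.Real_Asymp"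
begin

text \<open>A neuron \<open>(c, U, W)\<close> contributes to the tangent kernel at width \<open>m\<close>, up to the factor
  \<open>1/m\<close>, the sum over its coordinates of products of partial derivatives. The partial derivative
  in \<open>W\<^sub>j\<^sub>k\<close> is \<open>c \<sigma>'(U\<^sup>T a) (M U)\<^sub>j (q\<^sub>X)\<^sub>k\<close>, \<open>M\<close> being the derivative of the softmax
  average, so the contribution is
  \<open>k(U, W) = \<sigma>\<sigma> + c\<^sup>2 \<sigma>'\<sigma>' \<langle>a, a'\<rangle> + c\<^sup>2 \<langle>q\<^sub>X, q\<^sub>X'\<rangle> \<sigma>'\<sigma>' U\<^sup>T M M' U\<close>.
  Almost surely \<open>c\<^sup>2 = 1\<close>, so both halves of the symmetric initialisation contribute the same
  \<open>k(U\<^sub>i, W\<^sub>i)\<close>, and the kernel at width \<open>2n\<close> is exactly the average of \<open>n\<close> independent,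
  identically distributed copies of \<open>k(U, W)\<close>. As \<open>|k(U, W)|\<close> grows at most quadratically in
  \<open>|U|\<close>, it is square integrable for Gaussian \<open>U\<close>, and the strong law of large numbers for
  pairwise independent square integrable variables (Chebyshev along the squares, then monotone
  interpolation) gives almost sure convergence to \<open>E k = K\<^sub>c + K\<^sub>u + K\<^sub>w\<close>.\<close>

section \<open>A strong law of large numbers\<close>

lemma (in prob_space) expectation_sq_sum_centered_le:
  fixes Y :: "nat \<Rightarrow> 'a \<Rightarrow> real"
  assumes meas: "\<And>i. Y i \<in> borel_measurable M"
    and ind: "\<And>i j. i \<noteq> j \<Longrightarrow> indep_var borel (Y i) borel (Y j)"
    and sq: "\<And>i. integrable M (\<lambda>\<omega>. (Y i \<omega>)^2)"
    and mean: "\<And>i. expectation (Y i) = \<mu>"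
    and var: "\<And>i. expectation (\<lambda>\<omega>. (Y i \<omega> - \<mu>)^2) \<le> C"
  shows "integrable M (\<lambda>\<omega>. (\<Sum>i<n. (Y i \<omega> - \<mu>))^2)"
    and "expectation (\<lambda>\<omega>. (\<Sum>i<n. (Y i \<omega> - \<mu>))^2) \<le> n * C"
proof -
  define Z where "Z i \<omega> = Y i \<omega> - \<mu>" for i \<omega>
  have intY: "integrable M (Y i)" for i
    by (rule square_integrable_imp_integrable[OF meas sq])
  have intZ: "integrable M (Z i)" for i
    unfolding Z_def using intY by auto
  have EZ: "expectation (Z i) = 0" for i
    unfolding Z_def using intY mean by (simp add: prob_space)
  have indZ: "indep_var borel (Z i) borel (Z j)" if "i \<noteq> j" for i j
  proof -
    have "indep_var borel ((\<lambda>x. x - \<mu>) \<circ> Y i) borel ((\<lambda>x. x - \<mu>) \<circ> Y j)"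
      by (rule indep_var_compose[OF ind[OF that]]) auto
    then show ?thesis unfolding Z_def comp_def .
  qed
  have intZZ: "integrable M (\<lambda>\<omega>. Z i \<omega> * Z j \<omega>)" for i j
  proof (cases "i = j")
    case True
    have "integrable M (\<lambda>\<omega>. (Y i \<omega>)^2 - 2 * \<mu> * Y i \<omega> + \<mu>^2)"
      using sq intY by auto
    then show ?thesis
      using True by (simp add: Z_def power2_eq_square algebra_simps)
  next
    case False
    then show ?thesis using indep_var_integrable[OF indZ[OF False] intZ intZ] by simp
  qed
  have sq_sum: "(\<Sum>i<n. Z i \<omega>)^2 = (\<Sum>i<n. \<Sum>j<n. Z i \<omega> * Z j \<omega>)" for \<omega>
    by (simp add: power2_eq_square sum_product)
  show "integrable M (\<lambda>\<omega>. (\<Sum>i<n. (Y i \<omega> - \<mu>))^2)"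
    using intZZ by (simp add: sq_sum flip: Z_def)
  have "expectation (\<lambda>\<omega>. (\<Sum>i<n. Z i \<omega>)^2) = (\<Sum>i<n. \<Sum>j<n. expectation (\<lambda>\<omega>. Z i \<omega> * Z j \<omega>))"
    unfolding sq_sum using intZZ by (simp add: integral_sum)
  also have "\<dots> = (\<Sum>i<n. expectation (\<lambda>\<omega>. Z i \<omega> * Z i \<omega>))"
  proof (rule sum.cong[OF refl])
    fix i assume "i \<in> {..<n}"
    moreover have "expectation (\<lambda>\<omega>. Z i \<omega> * Z j \<omega>) = 0" if "j \<noteq> i" for j
      using indep_var_lebesgue_integral[OF indZ intZ intZ] EZ that by auto
    ultimately show "(\<Sum>j<n. expectation (\<lambda>\<omega>. Z i \<omega> * Z j \<omega>)) = expectation (\<lambda>\<omega>. Z i \<omega> * Z i \<omega>)"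
      by (subst sum.remove[of _ i]) auto
  qed
  also have "\<dots> \<le> (\<Sum>i<n. C)"
    by (rule sum_mono) (use var in \<open>auto simp: Z_def power2_eq_square\<close>)
  finally show "expectation (\<lambda>\<omega>. (\<Sum>i<n. (Y i \<omega> - \<mu>))^2) \<le> n * C"
    by (simp add: Z_def)
qed

text \<open>Chebyshev along the subsequence of squares: the second moments of the centred averages
  are summable, so by monotone convergence the averages converge almost surely.\<close>
lemma (in prob_space) slln_along_squares:
  fixes Y :: "nat \<Rightarrow> 'a \<Rightarrow> real"
  assumes meas: "\<And>i. Y i \<in> borel_measurable M"
    and ind: "\<And>i j. i \<noteq> j \<Longrightarrow> indep_var borel (Y i) borel (Y j)"
    and sq: "\<And>i. integrable M (\<lambda>\<omega>. (Y i \<omega>)^2)"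
    and mean: "\<And>i. expectation (Y i) = \<mu>"
    and var: "\<And>i. expectation (\<lambda>\<omega>. (Y i \<omega> - \<mu>)^2) \<le> C"
  shows "AE \<omega> in M. (\<lambda>k. (\<Sum>i<(Suc k)^2. Y i \<omega>) / (Suc k)^2) \<longlonglongrightarrow> \<mu>"
proof -
  define N where "N k = (Suc k)^2" for k
  define f where "f k \<omega> = ((\<Sum>i<N k. (Y i \<omega> - \<mu>)) / N k)^2" for k \<omega>
  have "0 \<le> expectation (\<lambda>\<omega>. (Y 0 \<omega> - \<mu>)^2)" by (rule integral_nonneg_AE) auto
  then have C_nonneg: "0 \<le> C" using var[of 0] by linarith
  have N_pos: "0 < real (N k)" for k by (simp add: N_def)
  have f_meas: "f k \<in> borel_measurable M" for k unfolding f_def using meas by measurable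
  have f_nonneg: "0 \<le> f k \<omega>" for k \<omega> by (simp add: f_def)
  have f_eq: "f k = (\<lambda>\<omega>. (\<Sum>i<N k. (Y i \<omega> - \<mu>))^2 / (real (N k))^2)" for k
    by (auto simp: f_def power_divide)
  have f_int: "integrable M (f k)" for k
    unfolding f_eq using expectation_sq_sum_centered_le(1)[OF meas ind sq mean var] by auto
  have f_exp: "expectation (f k) \<le> C / (real (Suc k))^2" for k
  proof -
    have "expectation (f k) \<le> N k * C / (real (N k))^2"
      unfolding f_eq using expectation_sq_sum_centered_le(2)[OF meas ind sq mean var]
      by (auto intro: divide_right_mono)
    also have "\<dots> = C / real (N k)" using N_pos[of k] by (simp add: power2_eq_square)
    also have "\<dots> = C / (real (Suc k))^2" by (simp add: N_def)
    finally show ?thesis .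
  qed
  have "summable (\<lambda>k::nat. 1 / (real (Suc k))^2)"
    using inverse_power_summable[of 2] by (subst summable_Suc_iff) (simp add: inverse_eq_divide)
  then have summable: "summable (\<lambda>k::nat. C / (real (Suc k))^2)"
    using summable_mult[of _ C] by (simp add: divide_inverse)
  have "(\<integral>\<^sup>+\<omega>. (\<Sum>k. ennreal (f k \<omega>)) \<partial>M) = (\<Sum>k. \<integral>\<^sup>+\<omega>. ennreal (f k \<omega>) \<partial>M)"
    by (rule nn_integral_suminf) (use f_meas in auto)
  also have "\<dots> = (\<Sum>k. ennreal (expectation (f k)))"
    by (intro suminf_cong nn_integral_eq_integral) (use f_int f_nonneg in auto)
  also have "\<dots> \<le> (\<Sum>k. ennreal (C / (real (Suc k))^2))"
    by (intro suminf_le) (use f_exp in \<open>auto intro: ennreal_leI\<close>)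
  also have "\<dots> = ennreal (\<Sum>k. C / (real (Suc k))^2)"
    using summable C_nonneg by (intro suminf_ennreal2) auto
  also have "\<dots> < \<infinity>" by simp
  finally have "(\<integral>\<^sup>+\<omega>. (\<Sum>k. ennreal (f k \<omega>)) \<partial>M) \<noteq> \<infinity>" by simp
  then have "AE \<omega> in M. (\<Sum>k. ennreal (f k \<omega>)) \<noteq> \<infinity>"
    by (intro nn_integral_PInf_AE) (use f_meas in measurable)
  then show ?thesis
  proof (rule AE_mp, intro AE_I2 impI)
    fix \<omega> assume "(\<Sum>k. ennreal (f k \<omega>)) \<noteq> \<infinity>"
    then have "summable (\<lambda>k. f k \<omega>)"
      using f_nonneg by (intro summable_suminf_not_top) auto
    then have "(\<lambda>k. f k \<omega>) \<longlonglongrightarrow> 0" by (rule summable_LIMSEQ_zero)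
    then have "(\<lambda>k. sqrt (f k \<omega>)) \<longlonglongrightarrow> 0"
      using tendsto_real_sqrt by fastforce
    then have "(\<lambda>k. (\<Sum>i<N k. (Y i \<omega> - \<mu>)) / N k) \<longlonglongrightarrow> 0"
      by (simp only: f_def real_sqrt_abs tendsto_rabs_zero_iff)
    then have "(\<lambda>k. \<mu> + (\<Sum>i<N k. (Y i \<omega> - \<mu>)) / N k) \<longlonglongrightarrow> \<mu> + 0"
      by (intro tendsto_add) auto
    moreover have "\<mu> + (\<Sum>i<N k. (Y i \<omega> - \<mu>)) / N k = (\<Sum>i<(Suc k)^2. Y i \<omega>) / (Suc k)^2" for k
      using N_pos[of k] by (simp add: sum_subtractf N_def field_simps)
    ultimately show "(\<lambda>k. (\<Sum>i<(Suc k)^2. Y i \<omega>) / (Suc k)^2) \<longlonglongrightarrow> \<mu>" by simp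
  qed
qed

text \<open>For nonnegative terms the partial sums are monotone, so for
  \<open>k\<^sup>2 \<le> n < (k + 1)\<^sup>2\<close> the average at \<open>n\<close> is squeezed between the averages
  at \<open>k\<^sup>2\<close> and \<open>(k + 1)\<^sup>2\<close>, up to factors tending to 1.\<close>
lemma LIMSEQ_averages_if_LIMSEQ_square_averages:
  fixes y :: "nat \<Rightarrow> real"
  assumes nonneg: "\<And>i. 0 \<le> y i"
    and squares: "(\<lambda>k. (\<Sum>i<(Suc k)^2. y i) / (Suc k)^2) \<longlonglongrightarrow> \<mu>"
  shows "(\<lambda>n. (\<Sum>i<n. y i) / n) \<longlonglongrightarrow> \<mu>"
proof -
  define S where "S n = (\<Sum>i<n. y i)" for n
  define T where "T k = S ((Suc k)^2) / (Suc k)^2" for k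
  have S_nonneg: "0 \<le> S n" for n unfolding S_def using nonneg by (simp add: sum_nonneg)
  have S_mono: "S m \<le> S n" if "m \<le> n" for m n
    unfolding S_def using that nonneg by (intro sum_mono2) auto
  have T: "T \<longlonglongrightarrow> \<mu>" using squares unfolding T_def S_def .
  define upper where "upper k = T (Suc k) * ((real (Suc (Suc k)))^2 / (real (Suc k))^2)" for k
  define lower where "lower k = T k * ((real (Suc k))^2 / (real (Suc (Suc k)))^2)" for k
  have "(\<lambda>k. (real (Suc (Suc k)))^2 / (real (Suc k))^2) \<longlonglongrightarrow> 1"
    by real_asymp
  from tendsto_mult[OF LIMSEQ_Suc[OF T] this] have upper: "upper \<longlonglongrightarrow> \<mu>"
    unfolding upper_def by simp
  have "(\<lambda>k. (real (Suc k))^2 / (real (Suc (Suc k)))^2) \<longlonglongrightarrow> 1"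
    by real_asymp
  from tendsto_mult[OF T this] have lower: "lower \<longlonglongrightarrow> \<mu>"
    unfolding lower_def by simp
  define k where "k n = floor_sqrt n - 1" for n
  have k: "filterlim k at_top sequentially"
    unfolding filterlim_at_top
  proof
    fix K
    have "K \<le> k n" if "(Suc K)^2 \<le> n" for n
      using le_floor_sqrtI[OF that] by (simp add: k_def)
    then show "eventually (\<lambda>n. K \<le> k n) sequentially"
      by (rule eventually_sequentiallyI)
  qed
  have bounds: "lower (k n) \<le> S n / n \<and> S n / n \<le> upper (k n)" if "1 \<le> n" for n
  proof -
    define r where "r = floor_sqrt n"
    have r: "1 \<le> r" "r^2 \<le> n" "n < (Suc r)^2"
      using that by (simp_all add: r_def le_floor_sqrtI Suc_floor_sqrt_power2_gt)
    then have r_real: "real r ^ 2 \<le> real n" "real n \<le> real (Suc r) ^ 2"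
      by (metis of_nat_le_iff of_nat_power, metis less_imp_le of_nat_le_iff of_nat_power)
    have Suc_k: "Suc (k n) = r" using r by (simp add: k_def r_def)
    have "S n / n \<le> S ((Suc r)^2) / n"
      using S_mono[of n "(Suc r)^2"] r that by (simp add: divide_right_mono)
    also have "\<dots> \<le> S ((Suc r)^2) / (real r)^2"
      using r r_real S_nonneg that by (intro divide_left_mono) auto
    finally have "S n / n \<le> upper (k n)"
      unfolding upper_def T_def Suc_k using r by (simp add: field_simps)
    moreover have "S (r^2) / (real (Suc r))^2 \<le> S (r^2) / n"
      using r_real S_nonneg that by (intro divide_left_mono) auto
    moreover have "\<dots> \<le> S n / n"
      using S_mono[OF r(2)] by (simp add: divide_right_mono)
    moreover have "lower (k n) = S (r^2) / (real (Suc r))^2"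
      unfolding lower_def T_def Suc_k using r by (simp add: field_simps)
    ultimately show ?thesis by linarith
  qed
  have "(\<lambda>n. S n / n) \<longlonglongrightarrow> \<mu>"
  proof (rule tendsto_sandwich)
    show "\<forall>\<^sub>F n in sequentially. lower (k n) \<le> S n / real n"
      "\<forall>\<^sub>F n in sequentially. S n / real n \<le> upper (k n)"
      using bounds by (auto intro: eventually_sequentiallyI[of 1])
  qed (use filterlim_compose[OF lower k] filterlim_compose[OF upper k] in auto)
  then show ?thesis by (simp add: S_def)
qed

lemma (in prob_space) integrable_comp_if_distr_eq:
  assumes "X \<in> borel_measurable M" "Y \<in> borel_measurable M" "distr M borel X = distr M borel Y"
    and "g \<in> borel_measurable borel" "integrable M (\<lambda>\<omega>. g (Y \<omega>) :: real)"
  shows "integrable M (\<lambda>\<omega>. g (X \<omega>))"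
proof -
  have "integrable (distr M borel Y) g"
    by (subst integrable_distr_eq) (use assms in auto)
  then have "integrable (distr M borel X) g"
    by (simp only: assms(3))
  then show ?thesis
    by (subst (asm) integrable_distr_eq) (use assms in auto)
qed

lemma (in prob_space) expectation_comp_if_distr_eq:
  assumes "X \<in> borel_measurable M" "Y \<in> borel_measurable M" "distr M borel X = distr M borel Y"
    and "g \<in> borel_measurable borel"
  shows "expectation (\<lambda>\<omega>. g (X \<omega>)) = (expectation (\<lambda>\<omega>. g (Y \<omega>)) :: real)"
proof -
  have "expectation (\<lambda>\<omega>. g (X \<omega>)) = integral\<^sup>L (distr M borel X) g"
    by (rule integral_distr[symmetric]) (use assms in auto)
  also have "\<dots> = integral\<^sup>L (distr M borel Y) g"
    by (simp only: assms(3))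
  also have "\<dots> = expectation (\<lambda>\<omega>. g (Y \<omega>))"
    by (rule integral_distr) (use assms in auto)
  finally show ?thesis .
qed

lemma (in prob_space) slln_nonneg:
  fixes Y :: "nat \<Rightarrow> 'a \<Rightarrow> real"
  assumes meas: "\<And>i. Y i \<in> borel_measurable M"
    and ind: "\<And>i j. i \<noteq> j \<Longrightarrow> indep_var borel (Y i) borel (Y j)"
    and ident: "\<And>i. distr M borel (Y i) = distr M borel (Y 0)"
    and sq: "integrable M (\<lambda>\<omega>. (Y 0 \<omega>)^2)"
    and nonneg: "\<And>i \<omega>. 0 \<le> Y i \<omega>"
  shows "AE \<omega> in M. (\<lambda>n. (\<Sum>i<n. Y i \<omega>) / n) \<longlonglongrightarrow> expectation (Y 0)"
proof -
  let ?\<mu> = "expectation (Y 0)"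
  have sq_dev_meas: "(\<lambda>x. (x - ?\<mu>)^2) \<in> borel_measurable borel"
    by measurable
  have sq_i: "integrable M (\<lambda>\<omega>. (Y i \<omega>)^2)" for i
    using integrable_comp_if_distr_eq[OF meas meas ident, of "\<lambda>x. x^2"] sq by simp
  have mean: "expectation (Y i) = ?\<mu>" for i
    using expectation_comp_if_distr_eq[OF meas meas ident, of "\<lambda>x. x"] by simp
  have var: "expectation (\<lambda>\<omega>. (Y i \<omega> - ?\<mu>)^2) \<le> expectation (\<lambda>\<omega>. (Y 0 \<omega> - ?\<mu>)^2)" for i
    using expectation_comp_if_distr_eq[OF meas meas ident sq_dev_meas] by (rule eq_refl)
  have "AE \<omega> in M. (\<lambda>k. (\<Sum>i<(Suc k)^2. Y i \<omega>) / (Suc k)^2) \<longlonglongrightarrow> ?\<mu>"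
    by (rule slln_along_squares[OF meas ind sq_i mean var])
  then show ?thesis
    by (rule AE_mp) (auto intro!: AE_I2 LIMSEQ_averages_if_LIMSEQ_square_averages nonneg)
qed

theorem (in prob_space) slln:
  fixes Y :: "nat \<Rightarrow> 'a \<Rightarrow> real"
  assumes meas: "\<And>i. Y i \<in> borel_measurable M"
    and ind: "\<And>i j. i \<noteq> j \<Longrightarrow> indep_var borel (Y i) borel (Y j)"
    and ident: "\<And>i. distr M borel (Y i) = distr M borel (Y 0)"
    and sq: "integrable M (\<lambda>\<omega>. (Y 0 \<omega>)^2)"
  shows "AE \<omega> in M. (\<lambda>n. (\<Sum>i<n. Y i \<omega>) / n) \<longlonglongrightarrow> expectation (Y 0)"
proof -
  have part: "AE \<omega> in M. (\<lambda>n. (\<Sum>i<n. g (Y i \<omega>)) / n) \<longlonglongrightarrow> expectation (\<lambda>\<omega>. g (Y 0 \<omega>))"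
    if g: "g \<in> borel_measurable borel" and "\<And>x. 0 \<le> g x" and "\<And>x. \<bar>g x\<bar> \<le> \<bar>x\<bar>"
    for g :: "real \<Rightarrow> real"
  proof (rule slln_nonneg)
    show g_meas: "(\<lambda>\<omega>. g (Y i \<omega>)) \<in> borel_measurable M" for i
      using g meas by measurable
    show "indep_var borel (\<lambda>\<omega>. g (Y i \<omega>)) borel (\<lambda>\<omega>. g (Y j \<omega>))" if "i \<noteq> j" for i j
      using indep_var_compose[OF ind[OF that] g g] by (simp add: comp_def)
    show "distr M borel (\<lambda>\<omega>. g (Y i \<omega>)) = distr M borel (\<lambda>\<omega>. g (Y 0 \<omega>))" for i
      using distr_distr[OF g meas[of i]] distr_distr[OF g meas[of 0]] ident[of i]
      by (simp add: comp_def)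
    have "(g x)^2 \<le> x^2" for x
      using that(3)[of x] abs_le_square_iff by blast
    then show "integrable M (\<lambda>\<omega>. (g (Y 0 \<omega>))^2)"
      by (intro Bochner_Integration.integrable_bound[OF sq] AE_I2) (use g_meas in auto)
  qed (use that in auto)
  have pos: "AE \<omega> in M. (\<lambda>n. (\<Sum>i<n. max (Y i \<omega>) 0) / n) \<longlonglongrightarrow> expectation (\<lambda>\<omega>. max (Y 0 \<omega>) 0)"
    by (rule part) auto
  have neg: "AE \<omega> in M. (\<lambda>n. (\<Sum>i<n. max (- Y i \<omega>) 0) / n) \<longlonglongrightarrow> expectation (\<lambda>\<omega>. max (- Y 0 \<omega>) 0)"
    by (rule part) auto
  have split: "x = max x 0 - max (- x) 0" for x :: real
    by auto
  have "integrable M (Y 0)"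
    by (rule square_integrable_imp_integrable[OF meas sq])
  then have expectation_split:
    "expectation (\<lambda>\<omega>. max (Y 0 \<omega>) 0) - expectation (\<lambda>\<omega>. max (- Y 0 \<omega>) 0) = expectation (Y 0)"
    by (subst Bochner_Integration.integral_diff[symmetric]) (auto simp flip: split)
  have average_split:
    "(\<Sum>i<n. max (Y i \<omega>) 0) / n - (\<Sum>i<n. max (- Y i \<omega>) 0) / n = (\<Sum>i<n. Y i \<omega>) / n" for n \<omega>
    by (simp add: diff_divide_distrib[symmetric] sum_subtractf[symmetric] split[symmetric])
  from pos neg show ?thesis
  proof eventually_elim
    case (elim \<omega>)
    from tendsto_diff[OF elim] show ?case
      unfolding average_split expectation_split .
  qed
qed

section \<open>Softmax attention\<close>

lemma sum_exp_pos: "0 < (\<Sum>s\<in>UNIV. exp (z s :: real))"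
  for z :: "'a::finite \<Rightarrow> real"
  by (intro sum_pos) auto

lemma softmax_nonneg: "0 \<le> softmax z $ t"
  by (simp add: softmax_def sum_nonneg)

lemma sum_softmax: "(\<Sum>t\<in>UNIV. softmax z $ t) = 1"
  using sum_exp_pos[of "\<lambda>s. z $ s"]
  by (simp add: softmax_def sum_divide_distrib[symmetric])

lemma softmax_le_1: "softmax z $ t \<le> 1"
  using member_le_sum[of t UNIV "\<lambda>t. softmax z $ t"] by (simp add: softmax_nonneg sum_softmax)

lemma softmax_jac_symmetric: "transpose (softmax_jac z) = softmax_jac z"
  by (simp add: softmax_jac_def transpose_def vec_eq_iff mult.commute)

lemma abs_softmax_jac_le_1: "\<bar>softmax_jac z $ s $ t\<bar> \<le> 1"
proof -
  define p where "p = softmax z $ s"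
  define r where "r = softmax z $ t"
  have bounds: "0 \<le> p" "p \<le> 1" "0 \<le> r" "r \<le> 1"
    by (simp_all add: p_def r_def softmax_nonneg softmax_le_1)
  then have pr: "0 \<le> p * r" "p * r \<le> 1" "0 \<le> p * p" "p * p \<le> p"
    by (simp_all add: mult_le_one mult_left_le)
  show ?thesis
  proof (cases "s = t")
    case True
    then have "softmax_jac z $ s $ t = p - p * p" by (simp add: softmax_jac_def p_def)
    then show ?thesis using bounds pr by (simp only: abs_le_iff) linarith
  next
    case False
    then have "softmax_jac z $ s $ t = - (p * r)" by (simp add: softmax_jac_def p_def r_def)
    then show ?thesis using bounds pr by (simp only: abs_le_iff) linarith
  qed
qed

lemma softmax_jac_mult_nth:
  "(softmax_jac z *v v) $ t = softmax z $ t * (v $ t - (\<Sum>s\<in>UNIV. softmax z $ s * v $ s))"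
proof -
  have "(softmax_jac z *v v) $ t
      = (\<Sum>s\<in>UNIV. ((if t = s then softmax z $ t else 0) - softmax z $ t * softmax z $ s) * v $ s)"
    by (simp add: softmax_jac_def matrix_vector_mult_def)
  also have "\<dots> = (\<Sum>s\<in>UNIV. (if t = s then softmax z $ t * v $ s else 0))
      - (\<Sum>s\<in>UNIV. softmax z $ t * (softmax z $ s * v $ s))"
    by (subst sum_subtractf[symmetric]) (rule sum.cong, auto simp: left_diff_distrib)
  finally show ?thesis
    by (simp add: sum_distrib_left right_diff_distrib)
qed

lemma has_real_derivative_softmax_line:
  fixes z v :: "real^'t"
  shows "((\<lambda>x. softmax (z + (x - x0) *s v) $ t) has_real_derivative (softmax_jac z *v v) $ t) (at x0)"
proof -
  define S where "S = (\<Sum>s\<in>UNIV. exp (z$s))"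
  have S: "0 < S" unfolding S_def by (rule sum_exp_pos)
  have eq: "softmax (z + (x - x0) *s v) $ t =
      exp (z$t + (x - x0) * v$t) / (\<Sum>s\<in>UNIV. exp (z$s + (x - x0) * v$s))" for x
    by (simp add: softmax_def left_diff_distrib)
  have "((\<lambda>x. exp (z$t + (x - x0) * v$t) / (\<Sum>s\<in>UNIV. exp (z$s + (x - x0) * v$s)))
     has_real_derivative (exp (z$t) * v$t * S - exp (z$t) * (\<Sum>s\<in>UNIV. exp (z$s) * v$s)) / (S * S)) (at x0)"
    by (auto intro!: derivative_eq_intros simp: S_def[symmetric] S less_imp_neq[OF S, symmetric])
  moreover have "(exp (z$t) * v$t * S - exp (z$t) * (\<Sum>s\<in>UNIV. exp (z$s) * v$s)) / (S * S)
      = (softmax_jac z *v v) $ t"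
    unfolding softmax_jac_mult_nth using S
    by (simp add: softmax_def S_def[symmetric] field_simps sum_distrib_left sum_divide_distrib)
  ultimately show ?thesis unfolding eq by simp
qed

lemma has_real_derivative_inner_softmax_line:
  fixes z v w :: "real^'t"
  shows "((\<lambda>x. w \<bullet> softmax (z + (x - x0) *s v)) has_real_derivative w \<bullet> (softmax_jac z *v v)) (at x0)"
  unfolding inner_vec_def inner_real_def
  by (intro DERIV_sum DERIV_cmult has_real_derivative_softmax_line)

lemma inner_attn: "U \<bullet> attn q X W = (transpose X *v U) \<bullet> softmax (transpose X *v (W *v q))"
  by (simp add: attn_def dot_lmul_matrix[symmetric])

lemma attnM_symmetric: "transpose (attnM q X W) = attnM q X W"
  by (simp add: attnM_def matrix_transpose_mul softmax_jac_symmetric matrix_mul_assoc)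

lemma inner_matrix_vector_mult_axis: "U \<bullet> (A *v axis j 1) = (transpose A *v U) $ j"
  by (simp add: dot_lmul_matrix[symmetric] inner_axis)

lemma inner_softmax_jac_attnM:
  "(transpose X *v U) \<bullet> (softmax_jac (transpose X *v (W *v q)) *v (transpose X *v y)) = U \<bullet> (attnM q X W *v y)"
proof -
  have "(transpose X *v U) \<bullet> z = U \<bullet> (X *v z)" for z
    by (simp add: dot_lmul_matrix)
  then show ?thesis
    by (simp add: attnM_def matrix_vector_mul_assoc matrix_mul_assoc del: transpose_matrix_vector)
qed

lemma matrix_upd_mult:
  "(\<chi> l n. if l = j \<and> n = k then x else W$l$n) *v (q::real^'d) = W *v q + ((x - W$j$k) * q$k) *s axis j 1"
proof -
  have "(\<Sum>n\<in>UNIV. (if l = j \<and> n = k then x else W$l$n) * q$n) =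
        (\<Sum>n\<in>UNIV. W$l$n * q$n) + (if l = j then (x - W$j$k) * q$k else 0)" for l
  proof -
    have "(\<Sum>n\<in>UNIV. (if l = j \<and> n = k then x else W$l$n) * q$n) =
        (\<Sum>n\<in>UNIV. W$l$n * q$n + (if n = k then (if l = j then (x - W$j$k) * q$n else 0) else 0))"
      by (rule sum.cong) (auto simp: algebra_simps)
    then show ?thesis by (simp add: sum.distrib)
  qed
  then show ?thesis
    by (simp add: vec_eq_iff matrix_vector_mult_def axis_def)
qed

lemma inner_vec_upd: "(\<chi> l. if l = j then x else U$l) \<bullet> a = U \<bullet> a + (x - U$j) * a$j"
proof -
  have upd: "(\<chi> l. if l = j then x else U$l) = U + (x - U$j) *\<^sub>R axis j 1"
    by (simp add: vec_eq_iff axis_def)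
  show ?thesis by (subst upd) (simp add: inner_add_left inner_axis' algebra_simps)
qed

lemma has_real_derivative_hneur_U:
  assumes "(\<sigma> has_real_derivative deriv \<sigma> (U \<bullet> attn q X W)) (at (U \<bullet> attn q X W))"
  shows "((\<lambda>x. hneur \<sigma> q X (\<chi> l. if l = j then x else U$l) W) has_real_derivative
      deriv \<sigma> (U \<bullet> attn q X W) * attn q X W $ j) (at (U$j))"
proof -
  define a where "a = attn q X W"
  have "((\<lambda>x. U \<bullet> a + (x - U$j) * a$j) has_real_derivative a$j) (at (U$j))"
    by (auto intro!: derivative_eq_intros)
  from DERIV_chain2[OF _ this] assms show ?thesis
    by (simp add: hneur_def inner_vec_upd a_def)
qed

lemma has_real_derivative_hneur_W:
  assumes "(\<sigma> has_real_derivative deriv \<sigma> (U \<bullet> attn q X W)) (at (U \<bullet> attn q X W))"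
  shows "((\<lambda>x. hneur \<sigma> q X U (\<chi> l n. if l = j \<and> n = k then x else W$l$n)) has_real_derivative
      deriv \<sigma> (U \<bullet> attn q X W) * ((attnM q X W *v U) $ j * q $ k)) (at (W$j$k))"
proof -
  define z where "z = transpose X *v (W *v q)"
  define v where "v = q$k *s (transpose X *v axis j 1)"
  define w where "w = transpose X *v U"
  have upd: "U \<bullet> attn q X (\<chi> l n. if l = j \<and> n = k then x else W$l$n) = w \<bullet> softmax (z + (x - W$j$k) *s v)"
    for x
    by (simp add: attn_def matrix_upd_mult dot_lmul_matrix[symmetric] matrix_vector_right_distrib
        z_def v_def w_def vector_scalar_commute mult.commute)
  have "w \<bullet> (softmax_jac z *v v) = q$k * (U \<bullet> (attnM q X W *v axis j 1))"
    unfolding v_def w_def z_def scalar_mult_eq_scaleR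
    by (simp add: matrix_vector_mult_scaleR inner_softmax_jac_attnM del: transpose_matrix_vector)
  also have "\<dots> = (attnM q X W *v U) $ j * q $ k"
    by (simp add: inner_matrix_vector_mult_axis attnM_symmetric)
  finally have inner_deriv:
    "((\<lambda>x. w \<bullet> softmax (z + (x - W$j$k) *s v)) has_real_derivative (attnM q X W *v U) $ j * q $ k)
      (at (W$j$k))"
    using has_real_derivative_inner_softmax_line[of w z "W$j$k" v] by simp
  have at: "w \<bullet> softmax (z + (W$j$k - W$j$k) *s v) = U \<bullet> attn q X W"
    by (simp add: inner_attn w_def z_def)
  have "((\<lambda>x. \<sigma> (w \<bullet> softmax (z + (x - W$j$k) *s v))) has_real_derivative
      deriv \<sigma> (U \<bullet> attn q X W) * ((attnM q X W *v U) $ j * q $ k)) (at (W$j$k))"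
    using DERIV_chain2[OF assms[folded at] inner_deriv] unfolding at .
  then show ?thesis
    by (simp only: hneur_def upd)
qed

section \<open>The tangent kernel of the symmetric initialisation\<close>

definition neuron_output :: "(real \<Rightarrow> real) \<Rightarrow> real^'d \<Rightarrow> real^'t^'d \<Rightarrow> 'd neuron \<Rightarrow> real" where
  "neuron_output \<sigma> q X \<theta> = fst \<theta> * hneur \<sigma> q X (fst (snd \<theta>)) (snd (snd \<theta>))"

fun neuron_partial :: "(real \<Rightarrow> real) \<Rightarrow> real^'d \<Rightarrow> real^'t^'d \<Rightarrow> ('d::finite) coord \<Rightarrow> 'd neuron \<Rightarrow> real"
  where
  "neuron_partial \<sigma> q X (Inl _) (c, U, W) = hneur \<sigma> q X U W"
| "neuron_partial \<sigma> q X (Inr (Inl j)) (c, U, W) = c * deriv \<sigma> (U \<bullet> attn q X W) * attn q X W $ j"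
| "neuron_partial \<sigma> q X (Inr (Inr (j, k))) (c, U, W) =
     c * deriv \<sigma> (U \<bullet> attn q X W) * ((attnM q X W *v U) $ j * q $ k)"

lemma has_real_derivative_neuron_output:
  assumes "\<And>x. \<sigma> differentiable (at x)"
  shows "((\<lambda>x. neuron_output \<sigma> q X (param_set \<kappa> x \<theta>)) has_real_derivative neuron_partial \<sigma> q X \<kappa> \<theta>)
    (at (param_get \<kappa> \<theta>))"
proof -
  obtain c U W where \<theta>: "\<theta> = (c, U, W)" by (cases \<theta>)
  have d\<sigma>: "(\<sigma> has_real_derivative deriv \<sigma> y) (at y)" for y
    using assms by (simp add: DERIV_deriv_iff_real_differentiable)
  consider (c) u where "\<kappa> = Inl u" | (U) j where "\<kappa> = Inr (Inl j)" | (W) j k where "\<kappa> = Inr (Inr (j, k))"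
    by (metis sum.exhaust prod.exhaust)
  then show ?thesis
  proof cases
    case c
    then show ?thesis by (auto simp: \<theta> neuron_output_def intro!: derivative_eq_intros)
  next
    case U
    from DERIV_cmult[OF has_real_derivative_hneur_U[OF d\<sigma>], of c] show ?thesis
      by (simp add: U \<theta> neuron_output_def mult.assoc)
  next
    case W
    from DERIV_cmult[OF has_real_derivative_hneur_W[OF d\<sigma>], of c] show ?thesis
      by (simp add: W \<theta> neuron_output_def mult.assoc)
  qed
qed

lemma partial_f_eq_neuron_partial:
  assumes "\<And>x. \<sigma> differentiable (at x)" and "i < m"
  shows "partial_f \<sigma> m q X \<phi> i \<kappa> = neuron_partial \<sigma> q X \<kappa> (\<phi> i) / sqrt m"
proof -
  define R where "R = (\<Sum>l\<in>{..<m} - {i}. neuron_output \<sigma> q X (\<phi> l))"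
  have fnet_upd: "fnet \<sigma> m q X (\<phi>(i := \<theta>)) = (neuron_output \<sigma> q X \<theta> + R) / sqrt m" for \<theta>
  proof -
    have "(\<Sum>l<m. neuron_output \<sigma> q X ((\<phi>(i := \<theta>)) l)) = neuron_output \<sigma> q X \<theta> + R"
      using assms(2) by (subst sum.remove[of _ i]) (auto simp: R_def intro!: sum.cong)
    then show ?thesis by (simp add: fnet_def neuron_output_def)
  qed
  have "((\<lambda>x. (neuron_output \<sigma> q X (param_set \<kappa> x (\<phi> i)) + R) / sqrt m) has_real_derivative
      (neuron_partial \<sigma> q X \<kappa> (\<phi> i) + 0) / sqrt m) (at (param_get \<kappa> (\<phi> i)))"
    by (intro DERIV_cdivide DERIV_add DERIV_const has_real_derivative_neuron_output assms(1))
  then show ?thesis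
    by (simp add: partial_f_def fnet_upd DERIV_imp_deriv)
qed

lemma ntk_eq_sum_neuron_partial_mult:
  assumes "\<And>x. \<sigma> differentiable (at x)"
  shows "ntk \<sigma> m q X X' \<phi> =
    (\<Sum>i<m. \<Sum>\<kappa>\<in>UNIV. neuron_partial \<sigma> (q X) X \<kappa> (\<phi> i) * neuron_partial \<sigma> (q X') X' \<kappa> (\<phi> i)) / m"
  unfolding ntk_def sum_divide_distrib
  by (intro sum.cong refl) (simp add: partial_f_eq_neuron_partial[OF assms])

definition neuron_kernel :: "(real \<Rightarrow> real) \<Rightarrow> real^'d \<Rightarrow> real^'d \<Rightarrow> real^'t^'d \<Rightarrow> real^'t^'d
    \<Rightarrow> real^'d \<Rightarrow> real^'d^'d \<Rightarrow> real" where
  "neuron_kernel \<sigma> qx qx' X X' U W =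
     \<sigma> (U \<bullet> attn qx X W) * \<sigma> (U \<bullet> attn qx' X' W)
     + deriv \<sigma> (U \<bullet> attn qx X W) * deriv \<sigma> (U \<bullet> attn qx' X' W) * (attn qx X W \<bullet> attn qx' X' W)
     + (qx \<bullet> qx') * (deriv \<sigma> (U \<bullet> attn qx X W) * deriv \<sigma> (U \<bullet> attn qx' X' W)
         * (U \<bullet> ((attnM qx X W ** attnM qx' X' W) *v U)))"

lemma sum_UNIV_Plus:
  "(\<Sum>x\<in>UNIV. g x) = (\<Sum>a\<in>UNIV. g (Inl a)) + (\<Sum>b\<in>UNIV. g (Inr b))"
  for g :: "'a::finite + 'b::finite \<Rightarrow> 'c::comm_monoid_add"
  using sum.Plus[of "UNIV :: 'a set" "UNIV :: 'b set" g] by (simp add: comp_def)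

lemma inner_symmetric_matrix_mult:
  "transpose A = A \<Longrightarrow> (A *v x) \<bullet> (B *v x) = x \<bullet> ((A ** B) *v (x :: real^'n))"
  by (metis dot_lmul_matrix matrix_vector_mul_assoc vector_transpose_matrix)

lemma sum_neuron_partial_mult:
  assumes "c^2 = 1"
  shows "(\<Sum>\<kappa>\<in>UNIV. neuron_partial \<sigma> qx X \<kappa> (c, U, W) * neuron_partial \<sigma> qx' X' \<kappa> (c, U, W))
    = neuron_kernel \<sigma> qx qx' X X' U W"
proof -
  define f where "f \<kappa> = neuron_partial \<sigma> qx X \<kappa> (c, U, W) * neuron_partial \<sigma> qx' X' \<kappa> (c, U, W)" for \<kappa>
  define s where "s = deriv \<sigma> (U \<bullet> attn qx X W) * deriv \<sigma> (U \<bullet> attn qx' X' W)"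
  have inner_sum: "a \<bullet> b = (\<Sum>j\<in>UNIV. a $ j * b $ j)" for a b :: "real^'d"
    by (simp add: inner_vec_def)
  have "f (Inr (Inl j)) = c^2 * (s * (attn qx X W $ j * attn qx' X' W $ j))" for j
    by (simp add: f_def s_def power2_eq_square mult_ac)
  then have U_part: "(\<Sum>j\<in>UNIV. f (Inr (Inl j))) = s * (attn qx X W \<bullet> attn qx' X' W)"
    using assms by (simp add: inner_sum sum_distrib_left)
  have "f (Inr (Inr (j, k))) = c^2 * (s * ((attnM qx X W *v U) $ j * (attnM qx' X' W *v U) $ j)
      * (qx $ k * qx' $ k))" for j k
    by (simp add: f_def s_def power2_eq_square mult_ac)
  then have W_entries: "f (Inr (Inr (j, k))) = s * ((attnM qx X W *v U) $ j * (attnM qx' X' W *v U) $ j)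
      * (qx $ k * qx' $ k)" for j k
    using assms by simp
  have "(\<Sum>jk\<in>UNIV. f (Inr (Inr jk))) = (\<Sum>j\<in>UNIV. \<Sum>k\<in>UNIV. f (Inr (Inr (j, k))))"
    by (simp add: sum.cartesian_product UNIV_Times_UNIV[symmetric] del: UNIV_Times_UNIV)
  also have "\<dots> =
      (\<Sum>j\<in>UNIV. s * ((attnM qx X W *v U) $ j * (attnM qx' X' W *v U) $ j)) * (\<Sum>k\<in>UNIV. qx $ k * qx' $ k)"
    by (simp add: W_entries sum_product)
  finally have "(\<Sum>jk\<in>UNIV. f (Inr (Inr jk))) = s * ((attnM qx X W *v U) \<bullet> (attnM qx' X' W *v U)) * (qx \<bullet> qx')"
    by (simp add: inner_sum sum_distrib_left)
  then have W_part: "(\<Sum>jk\<in>UNIV. f (Inr (Inr jk))) =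
      (qx \<bullet> qx') * (s * (U \<bullet> ((attnM qx X W ** attnM qx' X' W) *v U)))"
    by (simp add: inner_symmetric_matrix_mult attnM_symmetric)
  show ?thesis
    unfolding f_def[symmetric] sum_UNIV_Plus[of f] sum_UNIV_Plus[of "\<lambda>r. f (Inr r)"] U_part W_part
    by (simp add: f_def neuron_kernel_def s_def hneur_def UNIV_unit)
qed

lemma sum_lessThan_double: "(\<Sum>i<2 * n. g i) = (\<Sum>i<n. g i) + (\<Sum>i<n. g (i + n))"
  for g :: "nat \<Rightarrow> 'a::comm_monoid_add"
proof -
  have "(\<Sum>i<2 * n. g i) = (\<Sum>i\<in>{0..<n}. g i) + (\<Sum>i\<in>{n..<n + n}. g i)"
    by (simp add: sum.atLeastLessThan_concat mult_2 atLeast0LessThan[symmetric])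
  also have "(\<Sum>i\<in>{n..<n + n}. g i) = (\<Sum>i\<in>{0..<n}. g (i + n))"
    using sum.shift_bounds_nat_ivl[of g 0 n n] by simp
  finally show ?thesis by (simp add: atLeast0LessThan)
qed

lemma ntk_sym_init:
  assumes "\<And>x. \<sigma> differentiable (at x)" and "\<And>i. (c i)^2 = 1"
  shows "ntk \<sigma> (2 * n) q X X' (sym_init (2 * n) c U W) =
    (\<Sum>i<n. neuron_kernel \<sigma> (q X) (q X') X X' (U i) (W i)) / n"
proof -
  define G where "G i = (\<Sum>\<kappa>\<in>UNIV. neuron_partial \<sigma> (q X) X \<kappa> (sym_init (2 * n) c U W i) *
      neuron_partial \<sigma> (q X') X' \<kappa> (sym_init (2 * n) c U W i))" for i
  have "G i = neuron_kernel \<sigma> (q X) (q X') X X' (U i) (W i)" if "i < n" for i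
    using that assms(2) by (simp add: G_def sym_init_def sum_neuron_partial_mult)
  moreover have "G (i + n) = neuron_kernel \<sigma> (q X) (q X') X X' (U i) (W i)" for i
    using assms(2) by (simp add: G_def sym_init_def sum_neuron_partial_mult)
  ultimately have "(\<Sum>i<2 * n. G i) = 2 * (\<Sum>i<n. neuron_kernel \<sigma> (q X) (q X') X X' (U i) (W i))"
    by (simp add: sum_lessThan_double)
  then show ?thesis
    by (simp add: ntk_eq_sum_neuron_partial_mult[OF assms(1)] G_def[symmetric])
qed

section \<open>Bounds\<close>

lemma abs_nth_le_1_if_inX:
  assumes "inX X"
  shows "\<bar>X $ a $ s\<bar> \<le> 1"
proof -
  have "\<bar>column s X $ a\<bar> \<le> norm (column s X)" by (rule component_le_norm_cart)
  also have "\<dots> \<le> 1" using assms by (simp add: inX_def)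
  finally show ?thesis by (simp add: column_def)
qed

lemma norm_attn_le_1:
  assumes "inX X"
  shows "norm (attn q X W) \<le> 1"
proof -
  define p where "p = softmax (transpose X *v (W *v q))"
  have "norm (attn q X W) = norm (\<Sum>t\<in>UNIV. p $ t *s column t X)"
    by (simp add: attn_def p_def matrix_mult_sum)
  also have "\<dots> \<le> (\<Sum>t\<in>UNIV. norm (p $ t *s column t X))"
    by (rule norm_sum)
  also have "\<dots> \<le> (\<Sum>t\<in>UNIV. p $ t)"
  proof (rule sum_mono)
    fix t
    have "norm (column t X) \<le> 1" using assms by (simp add: inX_def)
    then show "norm (p $ t *s column t X) \<le> p $ t"
      by (simp add: scalar_mult_eq_scaleR p_def softmax_nonneg mult_left_le)
  qed
  also have "\<dots> = 1" by (simp add: p_def sum_softmax)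
  finally show ?thesis .
qed

lemma abs_inner_attn_le_1:
  assumes "inX X" "inX X'"
  shows "\<bar>attn q X W \<bullet> attn q' X' W'\<bar> \<le> 1"
proof -
  have "\<bar>attn q X W \<bullet> attn q' X' W'\<bar> \<le> norm (attn q X W) * norm (attn q' X' W')"
    by (rule Cauchy_Schwarz_ineq2)
  also have "\<dots> \<le> 1"
    using assms by (intro mult_le_one norm_attn_le_1) auto
  finally show ?thesis .
qed

lemma abs_matrix_mult_nth_le:
  fixes A :: "real^'n^'m" and B :: "real^'k^'n"
  assumes A: "\<And>i j. \<bar>A $ i $ j\<bar> \<le> \<alpha>" and B: "\<And>i j. \<bar>B $ i $ j\<bar> \<le> \<beta>"
  shows "\<bar>(A ** B) $ i $ j\<bar> \<le> real CARD('n) * (\<alpha> * \<beta>)"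
proof -
  have "\<bar>(A ** B) $ i $ j\<bar> \<le> (\<Sum>l\<in>UNIV. \<bar>A $ i $ l\<bar> * \<bar>B $ l $ j\<bar>)"
    by (simp add: matrix_matrix_mult_def abs_mult[symmetric] sum_abs)
  also have "\<dots> \<le> (\<Sum>l\<in>(UNIV :: 'n set). \<alpha> * \<beta>)"
    using A order_trans[OF abs_ge_zero A] by (intro sum_mono mult_mono B) auto
  finally show ?thesis by simp
qed

lemma abs_inner_matrix_vector_mult_le:
  fixes A :: "real^'n^'n"
  assumes "\<And>i j. \<bar>A $ i $ j\<bar> \<le> \<alpha>"
  shows "\<bar>x \<bullet> (A *v x)\<bar> \<le> real CARD('n) ^ 2 * \<alpha> * (norm x)^2"
proof -
  have "\<bar>x \<bullet> (A *v x)\<bar> \<le> norm x * norm (A *v x)"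
    by (rule Cauchy_Schwarz_ineq2)
  also have "norm (A *v x) \<le> onorm ((*v) A) * norm x"
    by (rule onorm) (simp add: matrix_vector_mul_bounded_linear)
  also have "onorm ((*v) A) \<le> real CARD('n) * real CARD('n) * \<alpha>"
    by (rule onorm_le_matrix_component[OF assms])
  finally show ?thesis
    by (simp add: mult_left_mono mult_right_mono power2_eq_square mult_ac)
qed

lemma abs_attnM_nth_le:
  fixes X :: "real^'t^'d"
  assumes "inX X"
  shows "\<bar>attnM q X W $ a $ b\<bar> \<le> real CARD('t) ^ 2"
proof -
  have X: "\<bar>X $ i $ j\<bar> \<le> 1" and XT: "\<bar>transpose X $ j $ i\<bar> \<le> 1" for i j
    using assms by (simp_all add: abs_nth_le_1_if_inX transpose_def)
  have "\<bar>(X ** softmax_jac (transpose X *v (W *v q))) $ i $ j\<bar> \<le> real CARD('t) * (1 * 1)" for i j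
    by (rule abs_matrix_mult_nth_le[OF X abs_softmax_jac_le_1])
  from abs_matrix_mult_nth_le[OF this XT] show ?thesis
    by (simp add: attnM_def power2_eq_square)
qed

lemma abs_inner_attnM_mult_le:
  fixes X X' :: "real^'t^'d"
  assumes "inX X" "inX X'"
  shows "\<bar>U \<bullet> ((attnM q X W ** attnM q' X' W) *v U)\<bar> \<le> real (CARD('d) ^ 3 * CARD('t) ^ 4) * (norm U)^2"
proof -
  have "\<bar>(attnM q X W ** attnM q' X' W) $ i $ j\<bar> \<le> real CARD('d) * (real CARD('t) ^ 2 * real CARD('t) ^ 2)"
    for i j
    by (intro abs_matrix_mult_nth_le abs_attnM_nth_le assms)
  from abs_inner_matrix_vector_mult_le[OF this]
  have "\<bar>U \<bullet> ((attnM q X W ** attnM q' X' W) *v U)\<bar> \<le>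
      real CARD('d) ^ 2 * (real CARD('d) * (real CARD('t) ^ 2 * real CARD('t) ^ 2)) * (norm U)^2" .
  also have "\<dots> = real (CARD('d) ^ 3 * CARD('t) ^ 4) * (norm U)^2"
    by (simp add: power2_eq_square power3_eq_cube power4_eq_xxxx mult_ac)
  finally show ?thesis .
qed

lemma abs_mult_le_sq:
  fixes f :: "real \<Rightarrow> real"
  assumes "\<And>x. \<bar>f x\<bar> \<le> b"
  shows "\<bar>f x * f y\<bar> \<le> b^2"
proof -
  have "0 \<le> b" using order_trans[OF abs_ge_zero assms] .
  then show ?thesis by (simp add: abs_mult power2_eq_square mult_mono assms)
qed

lemma abs_neuron_kernel_le:
  fixes X X' :: "real^'t^'d"
  assumes \<sigma>: "\<And>x. \<bar>\<sigma> x\<bar> \<le> \<sigma>0" and \<sigma>': "\<And>x. \<bar>deriv \<sigma> x\<bar> \<le> \<sigma>1" and "inX X" "inX X'"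
  shows "\<bar>neuron_kernel \<sigma> qx qx' X X' U W\<bar> \<le>
    \<sigma>0^2 + \<sigma>1^2 + \<bar>qx \<bullet> qx'\<bar> * \<sigma>1^2 * real (CARD('d) ^ 3 * CARD('t) ^ 4) * (norm U)^2"
proof -
  define s where "s = deriv \<sigma> (U \<bullet> attn qx X W) * deriv \<sigma> (U \<bullet> attn qx' X' W)"
  have s: "\<bar>s\<bar> \<le> \<sigma>1^2" unfolding s_def by (rule abs_mult_le_sq[OF \<sigma>'])
  have "\<bar>s * (attn qx X W \<bullet> attn qx' X' W)\<bar> \<le> \<sigma>1^2 * 1"
    unfolding abs_mult by (intro mult_mono s abs_inner_attn_le_1 assms) auto
  moreover have "\<bar>(qx \<bullet> qx') * (s * (U \<bullet> ((attnM qx X W ** attnM qx' X' W) *v U)))\<bar> \<le>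
      \<bar>qx \<bullet> qx'\<bar> * (\<sigma>1^2 * (real (CARD('d) ^ 3 * CARD('t) ^ 4) * (norm U)^2))"
    unfolding abs_mult by (intro mult_left_mono mult_mono s abs_inner_attnM_mult_le assms) auto
  moreover have "\<bar>\<sigma> (U \<bullet> attn qx X W) * \<sigma> (U \<bullet> attn qx' X' W)\<bar> \<le> \<sigma>0^2"
    by (rule abs_mult_le_sq[OF \<sigma>])
  ultimately show ?thesis
    unfolding neuron_kernel_def s_def[symmetric] by (simp add: mult_ac)
qed

section \<open>Measurability, independence and moments\<close>

lemma continuous_on_matrix_matrix_mult[continuous_intros]:
  "continuous_on S f \<Longrightarrow> continuous_on S g \<Longrightarrow>
    continuous_on S (\<lambda>x. (f x :: real^'n^'m) ** (g x :: real^'k^'n))"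
  unfolding matrix_matrix_mult_def by (intro continuous_intros)

lemma continuous_on_matrix_vector_mult[continuous_intros]:
  "continuous_on S f \<Longrightarrow> continuous_on S g \<Longrightarrow> continuous_on S (\<lambda>x. (f x :: real^'n^'m) *v g x)"
  unfolding matrix_vector_mult_def by (intro continuous_intros)

lemma continuous_on_softmax[continuous_intros]:
  assumes "continuous_on S f"
  shows "continuous_on S (\<lambda>x. softmax (f x :: real^'t))"
  unfolding softmax_def
  by (intro continuous_intros assms ballI less_imp_neq[OF sum_exp_pos, symmetric])

lemma continuous_on_softmax_jac[continuous_intros]:
  assumes "continuous_on S f"
  shows "continuous_on S (\<lambda>x. softmax_jac (f x :: real^'t))"
proof -
  have "continuous_on S (\<lambda>x. softmax (f x) $ i)" for i
    by (intro continuous_intros assms)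
  then have "continuous_on S (\<lambda>x. (if i = j then softmax (f x) $ i else 0) - softmax (f x) $ i * softmax (f x) $ j)"
    for i j
    by (cases "i = j") (simp_all add: continuous_intros)
  then show ?thesis
    unfolding softmax_jac_def by (intro continuous_on_vec_lambda)
qed

lemma continuous_on_attn[continuous_intros]:
  "continuous_on S f \<Longrightarrow> continuous_on S (\<lambda>x. attn q X (f x))"
  unfolding attn_def by (intro continuous_intros)

lemma continuous_on_attnM[continuous_intros]:
  "continuous_on S f \<Longrightarrow> continuous_on S (\<lambda>x. attnM q X (f x))"
  unfolding attnM_def by (intro continuous_intros)

lemma borel_measurable_deriv:
  fixes f :: "real \<Rightarrow> real"
  assumes "\<And>x. f differentiable (at x)"
  shows "deriv f \<in> borel_measurable borel"
proof (rule borel_measurable_LIMSEQ_real)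
  have "continuous_on UNIV f"
    using assms by (simp add: continuous_at_imp_continuous_on differentiable_imp_continuous_within)
  then show "(\<lambda>x. (f (x + 1 / Suc n) - f x) / (1 / Suc n)) \<in> borel_measurable borel" for n
    by (intro borel_measurable_continuous_onI continuous_intros continuous_on_compose2[OF \<open>continuous_on UNIV f\<close>])
      auto
  fix x :: real
  have "((\<lambda>h. (f (x + h) - f x) / h) \<longlongrightarrow> deriv f x) (at 0)"
    using assms by (simp add: DERIV_deriv_iff_real_differentiable[symmetric] DERIV_def)
  moreover have "filterlim (\<lambda>n::nat. 1 / real (Suc n)) (at 0) sequentially"
    unfolding filterlim_at using LIMSEQ_Suc[OF lim_const_over_n] by auto
  ultimately show "(\<lambda>n. (f (x + 1 / Suc n) - f x) / (1 / Suc n)) \<longlonglongrightarrow> deriv f x"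
    by (rule filterlim_compose)
qed

lemma borel_measurable_attn[measurable (raw)]:
  "W \<in> borel_measurable M \<Longrightarrow> (\<lambda>\<omega>. attn q X (W \<omega>)) \<in> borel_measurable M"
  by (rule borel_measurable_continuous_on[OF continuous_on_attn[OF continuous_on_id]])

lemma borel_measurable_attnM[measurable (raw)]:
  "W \<in> borel_measurable M \<Longrightarrow> (\<lambda>\<omega>. attnM q X (W \<omega>)) \<in> borel_measurable M"
  by (rule borel_measurable_continuous_on[OF continuous_on_attnM[OF continuous_on_id]])

lemma borel_measurable_matrix_matrix_mult[measurable (raw)]:
  fixes f :: "'a \<Rightarrow> real^'n^'m" and g :: "'a \<Rightarrow> real^'k^'n"
  shows "f \<in> borel_measurable M \<Longrightarrow> g \<in> borel_measurable M \<Longrightarrow> (\<lambda>\<omega>. f \<omega> ** g \<omega>) \<in> borel_measurable M"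
  by (rule borel_measurable_continuous_Pair[where H="(**)"]) (auto intro!: continuous_intros)

lemma borel_measurable_matrix_vector_mult[measurable (raw)]:
  fixes f :: "'a \<Rightarrow> real^'n^'m" and g :: "'a \<Rightarrow> real^'n"
  shows "f \<in> borel_measurable M \<Longrightarrow> g \<in> borel_measurable M \<Longrightarrow> (\<lambda>\<omega>. f \<omega> *v g \<omega>) \<in> borel_measurable M"
  by (rule borel_measurable_continuous_Pair[where H="(*v)"]) (auto intro!: continuous_intros)

lemma borel_measurable_neuron_kernel:
  assumes "\<And>x. \<sigma> differentiable (at x)"
    and [measurable]: "U \<in> borel_measurable M" "W \<in> borel_measurable M"
  shows "(\<lambda>\<omega>. neuron_kernel \<sigma> qx qx' X X' (U \<omega>) (W \<omega>)) \<in> borel_measurable M"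
proof -
  have [measurable]: "\<sigma> \<in> borel_measurable borel"
    using assms(1) by (intro borel_measurable_continuous_onI)
      (simp add: continuous_at_imp_continuous_on differentiable_imp_continuous_within)
  have [measurable]: "deriv \<sigma> \<in> borel_measurable borel"
    using assms(1) by (rule borel_measurable_deriv)
  show ?thesis
    unfolding neuron_kernel_def by measurable
qed

lemma borel_measurable_vec_componentwise:
  fixes f :: "'a \<Rightarrow> 'b::euclidean_space^'n"
  assumes "\<And>i. (\<lambda>x. f x $ i) \<in> borel_measurable M"
  shows "f \<in> borel_measurable M"
proof (subst borel_measurable_euclidean_space, intro ballI)
  fix b :: "'b^'n" assume "b \<in> Basis"
  then obtain i u where b: "b = axis i u" by (auto simp: Basis_vec_def)
  have "f x \<bullet> b = f x $ i \<bullet> u" for x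
    unfolding b by (metis inner_axis' inner_commute)
  moreover have "(\<lambda>x. f x $ i \<bullet> u) \<in> borel_measurable M"
    using assms[of i] by measurable
  ultimately show "(\<lambda>x. f x \<bullet> b) \<in> borel_measurable M"
    by simp
qed

lemma (in prob_space) borel_measurable_if_components_distributed:
  fixes U :: "'a \<Rightarrow> real^'n"
  assumes "\<And>j. distributed M lborel (\<lambda>\<omega>. U \<omega> $ j) (f j)"
  shows "U \<in> borel_measurable M"
  using distributed_measurable[OF assms] by (intro borel_measurable_vec_componentwise) simp

text \<open>The events have positive probability and are therefore measurable (\<open>measure\<close> is \<open>0\<close>
  on non-measurable sets).\<close>
lemma (in prob_space) AE_sq_eq_1_if_Rademacher:
  fixes c :: "'a \<Rightarrow> real"
  assumes "prob {\<omega>\<in>space M. c \<omega> = 1} = 1/2" and "prob {\<omega>\<in>space M. c \<omega> = -1} = 1/2"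
  shows "AE \<omega> in M. (c \<omega>)^2 = 1"
proof -
  define A where "A = {\<omega>\<in>space M. c \<omega> = 1}"
  define B where "B = {\<omega>\<in>space M. c \<omega> = -1}"
  have "S \<in> events" if "prob S = 1/2" for S
    using measure_notin_sets[of S M] that by (cases "S \<in> events") simp_all
  then have events: "A \<in> events" "B \<in> events"
    using assms by (simp_all add: A_def B_def)
  have "A \<inter> B = {}" by (auto simp: A_def B_def)
  then have "prob (A \<union> B) = 1"
    using finite_measure_Union[OF events] assms by (simp add: A_def B_def)
  then have "AE \<omega> in M. \<omega> \<in> A \<union> B" by (rule AE_prob_1)
  then show ?thesis by (rule AE_mp) (auto intro!: AE_I2 simp: A_def B_def)
qed

lemma norm_pow_le_sum_abs_pow:
  fixes x :: "real^'n"
  shows "norm x ^ k \<le> real CARD('n) ^ k * (\<Sum>j\<in>UNIV. \<bar>x $ j\<bar> ^ k)"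
proof -
  define m where "m = Max (range (\<lambda>j. \<bar>x $ j\<bar>))"
  have "m \<in> range (\<lambda>j. \<bar>x $ j\<bar>)"
    unfolding m_def by (rule Max_in) auto
  then obtain j0 where j0_max: "m = \<bar>x $ j0\<bar>"
    by blast
  have j0: "\<bar>x $ j\<bar> \<le> \<bar>x $ j0\<bar>" for j
    unfolding j0_max[symmetric] m_def by (rule Max_ge) auto
  have "norm x \<le> (\<Sum>j\<in>UNIV. \<bar>x $ j\<bar>)" by (rule norm_le_l1_cart)
  also have "\<dots> \<le> (\<Sum>j\<in>(UNIV :: 'n set). \<bar>x $ j0\<bar>)" by (intro sum_mono j0)
  finally have "norm x ^ k \<le> (real CARD('n) * \<bar>x $ j0\<bar>) ^ k"
    by (intro power_mono) auto
  also have "\<dots> \<le> real CARD('n) ^ k * (\<Sum>j\<in>UNIV. \<bar>x $ j\<bar> ^ k)"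
    unfolding power_mult_distrib by (intro mult_left_mono member_le_sum) auto
  finally show ?thesis .
qed

lemma (in prob_space) integrable_norm_pow_std_normal:
  fixes U :: "'a \<Rightarrow> real^'n"
  assumes "\<And>j. distributed M lborel (\<lambda>\<omega>. U \<omega> $ j) std_normal_density"
  shows "integrable M (\<lambda>\<omega>. norm (U \<omega>) ^ k)"
proof (rule Bochner_Integration.integrable_bound)
  have "integrable M (\<lambda>\<omega>. \<bar>U \<omega> $ j\<bar> ^ k)" for j
    using distributed_integrable[OF assms, of "\<lambda>x. \<bar>x\<bar> ^ k"] integrable_std_normal_moment_abs[of k]
    by (simp add: normal_density_nonneg)
  then show "integrable M (\<lambda>\<omega>. real CARD('n) ^ k * (\<Sum>j\<in>UNIV. \<bar>U \<omega> $ j\<bar> ^ k))"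
    by auto
  have [measurable]: "U \<in> borel_measurable M"
    by (rule borel_measurable_if_components_distributed[OF assms])
  show "(\<lambda>\<omega>. norm (U \<omega>) ^ k) \<in> borel_measurable M"
    by measurable
  show "AE \<omega> in M. norm (norm (U \<omega>) ^ k) \<le> norm (real CARD('n) ^ k * (\<Sum>j\<in>UNIV. \<bar>U \<omega> $ j\<bar> ^ k))"
    by (intro AE_I2) (simp add: norm_pow_le_sum_abs_pow sum_nonneg)
qed

lemma (in prob_space) indep_var_rows:
  fixes X :: "'i \<times> 'k \<Rightarrow> 'a \<Rightarrow> 'b"
  assumes ind: "indep_vars (\<lambda>_. N) X UNIV" and \<Phi>: "\<Phi> \<in> measurable (PiM K (\<lambda>_. N)) N'" and "i \<noteq> j"
  shows "indep_var N' (\<lambda>\<omega>. \<Phi> (\<lambda>\<kappa>\<in>K. X (i, \<kappa>) \<omega>)) N' (\<lambda>\<omega>. \<Phi> (\<lambda>\<kappa>\<in>K. X (j, \<kappa>) \<omega>))"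
proof -
  have rows: "indep_var (PiM ({i} \<times> K) (\<lambda>_. N)) (\<lambda>\<omega>. restrict (\<lambda>p. X p \<omega>) ({i} \<times> K))
      (PiM ({j} \<times> K) (\<lambda>_. N)) (\<lambda>\<omega>. restrict (\<lambda>p. X p \<omega>) ({j} \<times> K))"
    by (rule indep_var_restrict[OF ind]) (use \<open>i \<noteq> j\<close> in auto)
  have \<Phi>_row: "(\<lambda>f. \<Phi> (\<lambda>\<kappa>\<in>K. f (l, \<kappa>))) \<in> measurable (PiM ({l} \<times> K) (\<lambda>_. N)) N'" for l
    by (rule measurable_compose[OF _ \<Phi>]) (auto intro!: measurable_restrict measurable_component_singleton)
  have "indep_var N' ((\<lambda>f. \<Phi> (\<lambda>\<kappa>\<in>K. f (i, \<kappa>))) \<circ> (\<lambda>\<omega>. restrict (\<lambda>p. X p \<omega>) ({i} \<times> K)))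
      N' ((\<lambda>f. \<Phi> (\<lambda>\<kappa>\<in>K. f (j, \<kappa>))) \<circ> (\<lambda>\<omega>. restrict (\<lambda>p. X p \<omega>) ({j} \<times> K)))"
    by (rule indep_var_compose[OF rows \<Phi>_row \<Phi>_row])
  moreover have "(\<lambda>\<kappa>\<in>K. restrict (\<lambda>p. X p \<omega>) ({l} \<times> K) (l, \<kappa>)) = (\<lambda>\<kappa>\<in>K. X (l, \<kappa>) \<omega>)" for l \<omega>
    by (auto simp: restrict_def)
  ultimately show ?thesis by (simp add: comp_def)
qed

lemma (in prob_space) distr_row:
  fixes X :: "'i \<times> 'k \<Rightarrow> 'a \<Rightarrow> 'b"
  assumes ind: "indep_vars (\<lambda>_. N) X UNIV" and "K \<noteq> {}"
    and marginals: "\<And>\<kappa>. \<kappa> \<in> K \<Longrightarrow> distr M N (X (i, \<kappa>)) = D \<kappa>"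
  shows "distr M (PiM K (\<lambda>_. N)) (\<lambda>\<omega>. \<lambda>\<kappa>\<in>K. X (i, \<kappa>) \<omega>) = PiM K D"
proof -
  have "indep_vars (\<lambda>\<kappa>. PiM {(i, \<kappa>)} (\<lambda>_. N)) (\<lambda>\<kappa> \<omega>. restrict (\<lambda>p. X p \<omega>) {(i, \<kappa>)}) K"
    by (rule indep_vars_restrict[OF ind]) (auto simp: disjoint_family_on_def)
  then have "indep_vars (\<lambda>_. N) (\<lambda>\<kappa> \<omega>. (\<lambda>f. f (i, \<kappa>)) (restrict (\<lambda>p. X p \<omega>) {(i, \<kappa>)})) K"
    by (rule indep_vars_compose2) (rule measurable_component_singleton, simp)
  then have row_indep: "indep_vars (\<lambda>_. N) (\<lambda>\<kappa>. X (i, \<kappa>)) K"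
    by simp
  have "random_variable N (X (i, \<kappa>))" for \<kappa>
    using ind by (simp add: indep_vars_def)
  from indep_vars_iff_distr_eq_PiM[OF \<open>K \<noteq> {}\<close>, where M'="\<lambda>_. N" and X="\<lambda>\<kappa>. X (i, \<kappa>)", OF this] row_indep
  have "distr M (PiM K (\<lambda>_. N)) (\<lambda>\<omega>. \<lambda>\<kappa>\<in>K. X (i, \<kappa>) \<omega>) = PiM K (\<lambda>\<kappa>. distr M N (X (i, \<kappa>)))"
    by simp
  also have "\<dots> = PiM K D"
    by (rule PiM_cong) (simp_all add: marginals)
  finally show ?thesis .
qed

text \<open>Only the Gaussian coordinates \<open>Inr _\<close> of a neuron are read; the sign \<open>c\<close> has another
  law.\<close>
definition neuron_UW :: "('d::finite coord \<Rightarrow> real) \<Rightarrow> (real^'d) \<times> (real^'d^'d)" where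
  "neuron_UW f = ((\<chi> j. f (Inr (Inl j))), (\<chi> j k. f (Inr (Inr (j, k)))))"

lemma neuron_UW_param_get: "neuron_UW (\<lambda>\<kappa>\<in>range Inr. param_get \<kappa> (c, U, W)) = (U, W)"
  by (simp add: neuron_UW_def vec_eq_iff)

lemma measurable_neuron_UW: "neuron_UW \<in> borel_measurable (PiM (range Inr) (\<lambda>_. borel))"
  unfolding neuron_UW_def borel_prod[symmetric]
  by (intro measurable_Pair borel_measurable_vec_componentwise) (auto intro!: measurable_component_singleton)

lemma (in prob_space) integrable_neuron_kernel_sq:
  fixes U :: "'a \<Rightarrow> real^'d" and W :: "'a \<Rightarrow> real^'d^'d" and X X' :: "real^'t^'d"
  assumes U: "\<And>j. distributed M lborel (\<lambda>\<omega>. U \<omega> $ j) std_normal_density"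
    and W: "W \<in> borel_measurable M"
    and \<sigma>: "\<And>x. \<sigma> differentiable (at x)" "\<And>x. \<bar>\<sigma> x\<bar> \<le> \<sigma>0" "\<And>x. \<bar>deriv \<sigma> x\<bar> \<le> \<sigma>1"
    and X: "inX X" "inX X'"
  shows "integrable M (\<lambda>\<omega>. (neuron_kernel \<sigma> qx qx' X X' (U \<omega>) (W \<omega>))^2)"
proof (rule Bochner_Integration.integrable_bound)
  define A where "A = \<sigma>0^2 + \<sigma>1^2"
  define B where "B = \<bar>qx \<bullet> qx'\<bar> * \<sigma>1^2 * real (CARD('d) ^ 3 * CARD('t) ^ 4)"
  show "integrable M (\<lambda>\<omega>. A^2 + 2 * A * B * norm (U \<omega>) ^ 2 + B^2 * norm (U \<omega>) ^ 4)"
    using integrable_norm_pow_std_normal[OF U] by auto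
  have "U \<in> borel_measurable M"
    by (rule borel_measurable_if_components_distributed[OF U])
  from borel_measurable_neuron_kernel[OF \<sigma>(1) this W]
  show "(\<lambda>\<omega>. (neuron_kernel \<sigma> qx qx' X X' (U \<omega>) (W \<omega>))^2) \<in> borel_measurable M"
    by measurable
  show "AE \<omega> in M. norm ((neuron_kernel \<sigma> qx qx' X X' (U \<omega>) (W \<omega>))^2)
      \<le> norm (A^2 + 2 * A * B * norm (U \<omega>) ^ 2 + B^2 * norm (U \<omega>) ^ 4)"
  proof (rule AE_I2)
    fix \<omega>
    have "\<bar>neuron_kernel \<sigma> qx qx' X X' (U \<omega>) (W \<omega>)\<bar> \<le> A + B * (norm (U \<omega>))^2"
      using abs_neuron_kernel_le[OF \<sigma>(2,3) X] by (simp add: A_def B_def)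
    then have "(neuron_kernel \<sigma> qx qx' X X' (U \<omega>) (W \<omega>))^2 \<le> (A + B * (norm (U \<omega>))^2)^2"
      by (metis abs_ge_zero power2_abs power_mono)
    also have "\<dots> = A^2 + 2 * A * B * norm (U \<omega>) ^ 2 + B^2 * norm (U \<omega>) ^ 4"
      by (simp add: power2_eq_square power4_eq_xxxx algebra_simps)
    finally show "norm ((neuron_kernel \<sigma> qx qx' X X' (U \<omega>) (W \<omega>))^2)
      \<le> norm (A^2 + 2 * A * B * norm (U \<omega>) ^ 2 + B^2 * norm (U \<omega>) ^ 4)"
      by simp
  qed
qed

lemma (in prob_space) expectation_neuron_kernel:
  fixes U :: "'a \<Rightarrow> real^'d" and W :: "'a \<Rightarrow> real^'d^'d" and X X' :: "real^'t^'d"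
  assumes U: "\<And>j. distributed M lborel (\<lambda>\<omega>. U \<omega> $ j) std_normal_density"
    and [measurable]: "W \<in> borel_measurable M"
    and \<sigma>: "\<And>x. \<sigma> differentiable (at x)" "\<And>x. \<bar>\<sigma> x\<bar> \<le> \<sigma>0" "\<And>x. \<bar>deriv \<sigma> x\<bar> \<le> \<sigma>1"
    and X: "inX X" "inX X'"
  shows "expectation (\<lambda>\<omega>. neuron_kernel \<sigma> qx qx' X X' (U \<omega>) (W \<omega>)) =
      (\<integral>\<omega>. \<sigma> (U \<omega> \<bullet> attn qx X (W \<omega>)) * \<sigma> (U \<omega> \<bullet> attn qx' X' (W \<omega>)) \<partial>M)
    + (\<integral>\<omega>. deriv \<sigma> (U \<omega> \<bullet> attn qx X (W \<omega>)) * deriv \<sigma> (U \<omega> \<bullet> attn qx' X' (W \<omega>))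
        * (attn qx X (W \<omega>) \<bullet> attn qx' X' (W \<omega>)) \<partial>M)
    + (qx \<bullet> qx') * (\<integral>\<omega>. deriv \<sigma> (U \<omega> \<bullet> attn qx X (W \<omega>)) * deriv \<sigma> (U \<omega> \<bullet> attn qx' X' (W \<omega>))
        * (U \<omega> \<bullet> ((attnM qx X (W \<omega>) ** attnM qx' X' (W \<omega>)) *v U \<omega>)) \<partial>M)"
proof -
  have [measurable]: "U \<in> borel_measurable M"
    by (rule borel_measurable_if_components_distributed[OF U])
  have [measurable]: "\<sigma> \<in> borel_measurable borel"
    using \<sigma>(1) by (intro borel_measurable_continuous_onI)
      (simp add: continuous_at_imp_continuous_on differentiable_imp_continuous_within)
  have [measurable]: "deriv \<sigma> \<in> borel_measurable borel"
    using \<sigma>(1) by (rule borel_measurable_deriv)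
  define C where "C = real (CARD('d) ^ 3 * CARD('t) ^ 4)"
  have s: "\<bar>deriv \<sigma> x * deriv \<sigma> y\<bar> \<le> \<sigma>1^2" for x y
    by (rule abs_mult_le_sq[OF \<sigma>(3)])
  have "integrable M (\<lambda>\<omega>. \<sigma> (U \<omega> \<bullet> attn qx X (W \<omega>)) * \<sigma> (U \<omega> \<bullet> attn qx' X' (W \<omega>)))"
    by (rule integrable_const_bound[where B="\<sigma>0^2"]) (auto intro: abs_mult_le_sq[OF \<sigma>(2)])
  moreover have "integrable M (\<lambda>\<omega>. deriv \<sigma> (U \<omega> \<bullet> attn qx X (W \<omega>)) * deriv \<sigma> (U \<omega> \<bullet> attn qx' X' (W \<omega>))
      * (attn qx X (W \<omega>) \<bullet> attn qx' X' (W \<omega>)))"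
  proof (rule integrable_const_bound[where B="\<sigma>1^2 * 1"])
    show "AE \<omega> in M. norm (deriv \<sigma> (U \<omega> \<bullet> attn qx X (W \<omega>)) * deriv \<sigma> (U \<omega> \<bullet> attn qx' X' (W \<omega>))
      * (attn qx X (W \<omega>) \<bullet> attn qx' X' (W \<omega>))) \<le> \<sigma>1^2 * 1"
      unfolding real_norm_def abs_mult[of _ "_ \<bullet> _"]
      by (intro AE_I2 mult_mono s abs_inner_attn_le_1 X) auto
  qed measurable
  moreover have "integrable M (\<lambda>\<omega>. deriv \<sigma> (U \<omega> \<bullet> attn qx X (W \<omega>)) * deriv \<sigma> (U \<omega> \<bullet> attn qx' X' (W \<omega>))
      * (U \<omega> \<bullet> ((attnM qx X (W \<omega>) ** attnM qx' X' (W \<omega>)) *v U \<omega>)))"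
  proof (rule Bochner_Integration.integrable_bound)
    show "integrable M (\<lambda>\<omega>. \<sigma>1^2 * (C * norm (U \<omega>) ^ 2))"
      using integrable_norm_pow_std_normal[OF U] by auto
    show "AE \<omega> in M. norm (deriv \<sigma> (U \<omega> \<bullet> attn qx X (W \<omega>)) * deriv \<sigma> (U \<omega> \<bullet> attn qx' X' (W \<omega>))
      * (U \<omega> \<bullet> ((attnM qx X (W \<omega>) ** attnM qx' X' (W \<omega>)) *v U \<omega>))) \<le> norm (\<sigma>1^2 * (C * norm (U \<omega>) ^ 2))"
    proof (rule AE_I2)
      fix \<omega>
      have "\<bar>deriv \<sigma> (U \<omega> \<bullet> attn qx X (W \<omega>)) * deriv \<sigma> (U \<omega> \<bullet> attn qx' X' (W \<omega>))
        * (U \<omega> \<bullet> ((attnM qx X (W \<omega>) ** attnM qx' X' (W \<omega>)) *v U \<omega>))\<bar> \<le> \<sigma>1^2 * (C * norm (U \<omega>) ^ 2)"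
        unfolding abs_mult[of _ "_ \<bullet> _"] C_def by (intro mult_mono s abs_inner_attnM_mult_le X) auto
      then show "norm (deriv \<sigma> (U \<omega> \<bullet> attn qx X (W \<omega>)) * deriv \<sigma> (U \<omega> \<bullet> attn qx' X' (W \<omega>))
        * (U \<omega> \<bullet> ((attnM qx X (W \<omega>) ** attnM qx' X' (W \<omega>)) *v U \<omega>))) \<le> norm (\<sigma>1^2 * (C * norm (U \<omega>) ^ 2))"
        by (simp add: C_def)
    qed
  qed measurable
  ultimately show ?thesis
    by (simp add: neuron_kernel_def)
qed

lemma (in prob_space) slln_neuron_kernel:
  fixes c :: "nat \<Rightarrow> 'a \<Rightarrow> real" and U :: "nat \<Rightarrow> 'a \<Rightarrow> real^'d" and W :: "nat \<Rightarrow> 'a \<Rightarrow> real^'d^'d"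
    and X X' :: "real^'t^'d"
  assumes indep: "indep_vars (\<lambda>_. borel) (\<lambda>(i, \<kappa>) \<omega>. param_get \<kappa> (c i \<omega>, U i \<omega>, W i \<omega>)) UNIV"
    and U_dist: "\<And>i j. distributed M lborel (\<lambda>\<omega>. U i \<omega> $ j) std_normal_density"
    and W_dist: "\<And>i j k. distributed M lborel (\<lambda>\<omega>. W i \<omega> $ j $ k) std_normal_density"
    and \<sigma>: "\<And>x. \<sigma> differentiable (at x)" "\<And>x. \<bar>\<sigma> x\<bar> \<le> \<sigma>0" "\<And>x. \<bar>deriv \<sigma> x\<bar> \<le> \<sigma>1"
    and X: "inX X" "inX X'"
  shows "AE \<omega> in M. (\<lambda>n. (\<Sum>i<n. neuron_kernel \<sigma> qx qx' X X' (U i \<omega>) (W i \<omega>)) / n)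
    \<longlonglongrightarrow> expectation (\<lambda>\<omega>. neuron_kernel \<sigma> qx qx' X X' (U 0 \<omega>) (W 0 \<omega>))"
proof (rule slln)
  define Xc :: "nat \<times> 'd coord \<Rightarrow> 'a \<Rightarrow> real" where
    "Xc = (\<lambda>(i, \<kappa>) \<omega>. param_get \<kappa> (c i \<omega>, U i \<omega>, W i \<omega>))"
  define K where "K = range (Inr :: 'd + 'd \<times> 'd \<Rightarrow> 'd coord)"
  define \<Phi> where "\<Phi> f = neuron_kernel \<sigma> qx qx' X X' (fst (neuron_UW f)) (snd (neuron_UW f))" for f
  have U_meas: "U i \<in> borel_measurable M" for i
    by (rule borel_measurable_if_components_distributed[OF U_dist])
  have W_meas: "W i \<in> borel_measurable M" for i
    using distributed_measurable[OF W_dist] by (intro borel_measurable_vec_componentwise) simp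
  have [measurable]: "neuron_UW \<in> PiM K (\<lambda>_. borel) \<rightarrow>\<^sub>M borel \<Otimes>\<^sub>M borel"
    unfolding K_def borel_prod by (rule measurable_neuron_UW)
  have \<Phi>_meas: "\<Phi> \<in> borel_measurable (PiM K (\<lambda>_. borel))"
    unfolding \<Phi>_def by (intro borel_measurable_neuron_kernel[OF \<sigma>(1)]) measurable
  have row_meas: "(\<lambda>\<omega>. \<lambda>\<kappa>\<in>K. Xc (i, \<kappa>) \<omega>) \<in> measurable M (PiM K (\<lambda>_. borel))" for i
    using indep by (intro measurable_restrict) (simp add: Xc_def indep_vars_def)
  have kernel_row: "neuron_kernel \<sigma> qx qx' X X' (U i \<omega>) (W i \<omega>) = \<Phi> (\<lambda>\<kappa>\<in>K. Xc (i, \<kappa>) \<omega>)" for i \<omega>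
    by (simp add: \<Phi>_def K_def Xc_def neuron_UW_param_get)
  show "(\<lambda>\<omega>. neuron_kernel \<sigma> qx qx' X X' (U i \<omega>) (W i \<omega>)) \<in> borel_measurable M" for i
    by (rule borel_measurable_neuron_kernel[OF \<sigma>(1) U_meas W_meas])
  show "indep_var borel (\<lambda>\<omega>. neuron_kernel \<sigma> qx qx' X X' (U i \<omega>) (W i \<omega>))
      borel (\<lambda>\<omega>. neuron_kernel \<sigma> qx qx' X X' (U j \<omega>) (W j \<omega>))" if "i \<noteq> j" for i j
    using indep_var_rows[OF indep[folded Xc_def] \<Phi>_meas that] by (simp add: kernel_row)
  show "integrable M (\<lambda>\<omega>. (neuron_kernel \<sigma> qx qx' X X' (U 0 \<omega>) (W 0 \<omega>))^2)"
    by (rule integrable_neuron_kernel_sq[OF U_dist W_meas \<sigma> X])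
  define N where "N = density lborel (\<lambda>x. ennreal (std_normal_density x))"
  have "distr M borel (Xc (i, \<kappa>)) = N" if \<kappa>: "\<kappa> \<in> K" for i \<kappa>
  proof -
    have "distr M borel (Xc (i, \<kappa>)) = distr M lborel (Xc (i, \<kappa>))"
      by (rule distr_cong) auto
    also have "\<dots> = N"
    proof -
      obtain r where "\<kappa> = Inr r" using \<kappa> by (auto simp: K_def)
      then show ?thesis
        by (cases r) (auto simp: Xc_def N_def distributed_distr_eq_density[OF U_dist]
            distributed_distr_eq_density[OF W_dist])
    qed
    finally show ?thesis .
  qed
  then have "distr M (PiM K (\<lambda>_. borel)) (\<lambda>\<omega>. \<lambda>\<kappa>\<in>K. Xc (i, \<kappa>) \<omega>) = PiM K (\<lambda>_. N)" for i
    using distr_row[OF indep[folded Xc_def]] by (simp add: K_def)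
  then have "distr M borel (\<lambda>\<omega>. neuron_kernel \<sigma> qx qx' X X' (U i \<omega>) (W i \<omega>)) = distr (PiM K (\<lambda>_. N)) borel \<Phi>"
    for i
    using distr_distr[OF \<Phi>_meas row_meas] by (simp add: kernel_row comp_def)
  then show "distr M borel (\<lambda>\<omega>. neuron_kernel \<sigma> qx qx' X X' (U i \<omega>) (W i \<omega>)) =
      distr M borel (\<lambda>\<omega>. neuron_kernel \<sigma> qx qx' X X' (U 0 \<omega>) (W 0 \<omega>))" for i
    by simp
qed

theorem lemma4:
  fixes M :: "'w measure"
    and c :: "nat \<Rightarrow> 'w \<Rightarrow> real"
    and U :: "nat \<Rightarrow> 'w \<Rightarrow> real^'d"
    and W :: "nat \<Rightarrow> 'w \<Rightarrow> real^'d^'d"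
    and \<sigma> :: "real \<Rightarrow> real" and \<sigma>0 \<sigma>1 :: real
    and q :: "real^'t^'d \<Rightarrow> real^'d"
    and X X' :: "real^'t^'d"
  assumes "prob_space M"
    and indep: "prob_space.indep_vars M (\<lambda>_. borel)
                  (\<lambda>(i, \<kappa>) \<omega>. param_get \<kappa> (c i \<omega>, U i \<omega>, W i \<omega>)) UNIV"
    and c_dist: "\<And>i. measure M {\<omega>\<in>space M. c i \<omega> = 1} = 1/2 \<and>
                      measure M {\<omega>\<in>space M. c i \<omega> = -1} = 1/2"
    and U_dist: "\<And>i j. distributed M lborel (\<lambda>\<omega>. U i \<omega> $ j) std_normal_density"
    and W_dist: "\<And>i j k. distributed M lborel (\<lambda>\<omega>. W i \<omega> $ j $ k) std_normal_density"
    and \<sigma>_diff: "\<And>x. \<sigma> differentiable (at x)"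
    and \<sigma>_bd: "\<And>x. \<bar>\<sigma> x\<bar> \<le> \<sigma>0"
    and \<sigma>'_bd: "\<And>x. \<bar>deriv \<sigma> x\<bar> \<le> \<sigma>1"
    and q_bd: "\<And>Y. inX Y \<Longrightarrow> norm (q Y) \<le> 1"
    and X: "inX X" and X': "inX X'"
  shows "AE \<omega> in M.
     (\<lambda>n. ntk \<sigma> (2 * n) q X X' (sym_init (2 * n) (\<lambda>i. c i \<omega>) (\<lambda>i. U i \<omega>) (\<lambda>i. W i \<omega>)))
     \<longlonglongrightarrow>
       (\<integral>\<omega>. \<sigma> (U 0 \<omega> \<bullet> attn (q X) X (W 0 \<omega>)) * \<sigma> (U 0 \<omega> \<bullet> attn (q X') X' (W 0 \<omega>)) \<partial>M)
     + (\<integral>\<omega>. deriv \<sigma> (U 0 \<omega> \<bullet> attn (q X) X (W 0 \<omega>)) * deriv \<sigma> (U 0 \<omega> \<bullet> attn (q X') X' (W 0 \<omega>))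
             * (attn (q X) X (W 0 \<omega>) \<bullet> attn (q X') X' (W 0 \<omega>)) \<partial>M)
     + (q X \<bullet> q X') *
       (\<integral>\<omega>. deriv \<sigma> (U 0 \<omega> \<bullet> attn (q X) X (W 0 \<omega>)) * deriv \<sigma> (U 0 \<omega> \<bullet> attn (q X') X' (W 0 \<omega>))
             * (U 0 \<omega> \<bullet> ((attnM (q X) X (W 0 \<omega>) ** attnM (q X') X' (W 0 \<omega>)) *v U 0 \<omega>)) \<partial>M)"
proof -
  interpret prob_space M by fact
  have signs: "AE \<omega> in M. \<forall>i. (c i \<omega>)^2 = 1"
    using c_dist by (simp add: AE_all_countable AE_sq_eq_1_if_Rademacher)
  have "W 0 \<in> borel_measurable M"
    using distributed_measurable[OF W_dist] by (intro borel_measurable_vec_componentwise) simp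
  note expectation = expectation_neuron_kernel[OF U_dist this \<sigma>_diff \<sigma>_bd \<sigma>'_bd X X', of "q X" "q X'"]
  from slln_neuron_kernel[OF indep U_dist W_dist \<sigma>_diff \<sigma>_bd \<sigma>'_bd X X', of "q X" "q X'"] signs
  show ?thesis
  proof eventually_elim
    case (elim \<omega>)
    then show ?case
      by (simp add: ntk_sym_init[OF \<sigma>_diff] expectation)
  qed
qed

end
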